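(* Let $F$ be a Ferrers diagram of semiperimeter $n+1$ and $T\in\mathsf{EWtab}(F)$. For $j\in[1,n]$ let $\nu_j(T)$ be the number of non-cornersupport $0$s in the row labeled $j$ of $T$ if $j\in\mathsf{rows}(F)$, and the number of non-cornersupport $1$s in the column labeled $j$ of $T$ if $j\in\mathsf{cols}(F)$. Then $\nu_j(T)=\mu_j(\phi_{TC}(T))$ for all $j\in[1,n]$.
   Context: Ferrers diagrams and graphs: a Ferrers diagram $F$ (English convention) of semiperimeter $n+1$ has rows and columns labeled by $0,\ldots,n$: the $n+1$ unit steps of its south-east boundary path, traversed from top-right to bottom-left, are labeled $0,\ldots,n$; a vertical step labels the row it bounds, a horizontal step the column it bounds (top row labeled $0$). $\mathsf{rows}(F)$, $\mathsf{cols}(F)$ are the label sets; $F$ has a cell in row $i$, column $j$ iff $i<j$. $G(F)$ has vertex set $\{0,\ldots,n\}$ with edges $\{i,j\}$ for $i\in\mathsf{rows}(F)$, $j\in\mathsf{cols}(F)$, $i<j$. Sandpile model on $G(F)$ with sink $0$: configurations $c\in\mathbb{N}^n$; non-sink $v$ unstable if $c_v\ge\deg(v)$; toppling sends one grain to each neighbour (grains to $0$ disappear); toppling the sink adds one grain to each neighbour of $0$. Recurrent: stable configurations obtainable from $c_v=\deg(v)-1$ by adding grains and stabilizing; $\mathsf{Rec}^{\mathsf{min}}(G)$: recurrent configurations of minimal total grain count. Canonical toppling of a recurrent $c$: topple the sink ($U^{(0)}_c=\{0\}$), then alternately topple simultaneously all unstable vertices in $\mathsf{cols}(F)$ ($V^{(1)}_c$),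 all unstable in $\mathsf{rows}(F)$ ($U^{(1)}_c$), etc.; $\mathsf{CanonTop}(c)=(U^{(0)}_c,V^{(1)}_c,U^{(1)}_c,\ldots)$ is an ordered partition of $\{0,\ldots,n\}$. For $c\in\mathsf{Rec}^{\mathsf{min}}(G(F))$ and $j\in[1,n]$: $\mu_j(c)=|\{k\in V^{(\ell)}_c: k>j\}|$ if $j\in U^{(\ell)}_c$, and $\mu_j(c)=|\{k\in U^{(\ell-1)}_c: k<j\}|$ if $j\in V^{(\ell)}_c$. EW-tableaux: $0/1$-fillings $T$ of $F$ ($T_{ij}$ = entry in row $i$, column $j$) with top row all 1s, a 0 in every other row, and no rectangle with 0s in two diagonally opposite corners and 1s in the other two; $\mathsf{EWtab}(F)$ is their set. $\phi_{TC}(T)$ is the configuration with $c_i$ = number of 1s in row $i$ ($i\in\mathsf{rows}(F)$), $c_i$ = number of 0s in column $i$ ($i\in\mathsf{cols}(F)$); it lies in $\mathsf{Rec}^{\mathsf{min}}(G(F))$. $\mathsf{CanonTop}(T):=\mathsf{CanonTop}(\phi_{TC}(T))$. Supplementary tableau $S=S(T)$: the $|\mathsf{rows}(F)|\times|\mathsf{cols}(F)|$ array with $S_{ij}=1$ if row label $i$ lies in an earlier block of $\mathsf{CanonTop}(T)$ than column label $j$, else $0$ (agrees with $T$ on cells of $F$). An entry $x$ of $T$ at $(j,k)$ is a cornersupport entry iff there exist a row $j'\ne j$ and column $k'\ne k$ with $S_{j'k'}\ne x$ and $S_{j'k}=S_{jk'}=x$. *)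

theory Defs
  imports Main
begin

text \<open>A Ferrers diagram of semiperimeter n+1 is encoded by the set R of labels of
  its rows (vertical boundary steps); the remaining labels in {0..n} are columns.
  The top row is labelled 0, and the last boundary step n is horizontal (the
  leftmost column), i.e. no row or column is empty.\<close>

definition ferrers :: "nat \<Rightarrow> nat set \<Rightarrow> bool" where
  "ferrers n R \<longleftrightarrow> R \<subseteq> {0..n} \<and> 0 \<in> R \<and> n \<notin> R"

definition cols :: "nat \<Rightarrow> nat set \<Rightarrow> nat set" where
  "cols n R = {0..n} - R"

definition cell :: "nat \<Rightarrow> nat set \<Rightarrow> nat \<Rightarrow> nat \<Rightarrow> bool" where
  "cell n R i j \<longleftrightarrow> i \<in> R \<and> j \<in> cols n R \<and> i < j"

definition adjF :: "nat \<Rightarrow> nat set \<Rightarrow> nat \<Rightarrow> nat \<Rightarrow> bool" where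
  "adjF n R u v \<longleftrightarrow> cell n R u v \<or> cell n R v u"

definition degF :: "nat \<Rightarrow> nat set \<Rightarrow> nat \<Rightarrow> nat" where
  "degF n R v = card {u \<in> {0..n}. adjF n R u v}"

text \<open>Tableaux: T i j is the entry in row i, column j (True = 1, False = 0);
  only entries at cells of F are meaningful.\<close>
definition EWtab :: "nat \<Rightarrow> nat set \<Rightarrow> (nat \<Rightarrow> nat \<Rightarrow> bool) set" where
  "EWtab n R = {T.
     (\<forall>j. cell n R 0 j \<longrightarrow> T 0 j) \<and>
     (\<forall>i\<in>R. i \<noteq> 0 \<longrightarrow> (\<exists>j. cell n R i j \<and> \<not> T i j)) \<and>
     (\<forall>i i' j j'. cell n R i j \<and> cell n R i j' \<and> cell n R i' j \<and> cell n R i' j'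
        \<longrightarrow> \<not> (\<not> T i j \<and> \<not> T i' j' \<and> T i j' \<and> T i' j)
          \<and> \<not> (T i j \<and> T i' j' \<and> \<not> T i j' \<and> \<not> T i' j))}"

text \<open>The configuration phi_TC(T) (values at vertex 0 are irrelevant).\<close>
definition phiTC :: "nat \<Rightarrow> nat set \<Rightarrow> (nat \<Rightarrow> nat \<Rightarrow> bool) \<Rightarrow> nat \<Rightarrow> nat" where
  "phiTC n R T v =
     (if v \<in> R then card {k. cell n R v k \<and> T v k}
      else card {i. cell n R i v \<and> \<not> T i v})"

text \<open>Phase 0 topples the sink; phase 2l-1 topples
  simultaneously all unstable vertices in cols(F) (the block V^(l)); phase 2l
  topples simultaneously all unstable non-sink vertices in rows(F) (the block
  U^(l)).\<close>
primrec canon_stage :: "nat \<Rightarrow> nat set \<Rightarrow> (nat \<Rightarrow> nat) \<Rightarrow> nat \<Rightarrow> (nat \<Rightarrow> nat) \<times> nat set" where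
  "canon_stage n R c 0 = ((\<lambda>v. c v + (if adjF n R 0 v then 1 else 0)), {0})"
| "canon_stage n R c (Suc m) =
     (let d = fst (canon_stage n R c m);
          U = {v \<in> (if odd (Suc m) then cols n R else R - {0}). degF n R v \<le> d v}
      in ((\<lambda>v. d v - (if v \<in> U then degF n R v else 0) + card {u \<in> U. adjF n R u v}), U))"

definition canon_block :: "nat \<Rightarrow> nat set \<Rightarrow> (nat \<Rightarrow> nat) \<Rightarrow> nat \<Rightarrow> nat set" where
  "canon_block n R c m = snd (canon_stage n R c m)"

definition block_idx :: "nat \<Rightarrow> nat set \<Rightarrow> (nat \<Rightarrow> nat) \<Rightarrow> nat \<Rightarrow> nat" where
  "block_idx n R c v = (LEAST m. v \<in> canon_block n R c m)"

definition mu :: "nat \<Rightarrow> nat set \<Rightarrow> (nat \<Rightarrow> nat) \<Rightarrow> nat \<Rightarrow> nat" where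
  "mu n R c j =
     (let m = block_idx n R c j in
      if even m then card {k \<in> canon_block n R c (m - 1). k > j}
      else card {k \<in> canon_block n R c (m - 1). k < j})"

definition suppl :: "nat \<Rightarrow> nat set \<Rightarrow> (nat \<Rightarrow> nat \<Rightarrow> bool) \<Rightarrow> nat \<Rightarrow> nat \<Rightarrow> bool" where
  "suppl n R T i j \<longleftrightarrow> block_idx n R (phiTC n R T) i < block_idx n R (phiTC n R T) j"

definition cornersupport :: "nat \<Rightarrow> nat set \<Rightarrow> (nat \<Rightarrow> nat \<Rightarrow> bool) \<Rightarrow> nat \<Rightarrow> nat \<Rightarrow> bool" where
  "cornersupport n R T j k \<longleftrightarrow>
     (let x = T j k; S = suppl n R T in
      \<exists>j'\<in>R. \<exists>k'\<in>cols n R. j' \<noteq> j \<and> k' \<noteq> k \<and> S j' k' \<noteq> x \<and> S j' k = x \<and> S j k' = x)"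

definition nu :: "nat \<Rightarrow> nat set \<Rightarrow> (nat \<Rightarrow> nat \<Rightarrow> bool) \<Rightarrow> nat \<Rightarrow> nat" where
  "nu n R T j =
     (if j \<in> R then card {k. cell n R j k \<and> \<not> T j k \<and> \<not> cornersupport n R T j k}
      else card {i. cell n R i j \<and> T i j \<and> \<not> cornersupport n R T i j})"

end

theory Submission
  imports Defs
begin

text \<open>Let blk v be the index of the block of CanonTop(phi_TC T) containing v. Counting grains
  shows that, as long as the toppled set separates T (1s from toppled rows to untoppled columns,
  0s from toppled columns to untoppled rows), an untoppled row becomes unstable exactly when all
  columns carrying its 0s have toppled, and an untoppled column exactly when all rows carrying
  its 1s have. The rectangle condition rules out untoppled rows and columns blocking each other
  forever, so every vertex topples and T i k holds iff blk i < blk k. Since every block below an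
  occupied one is nonempty, the entry at (i,k) is a cornersupport entry iff blk i and blk k are
  not consecutive. Hence the non-cornersupport 0s of row j (1s of column j) are its entries in
  the block just before that of j, which is what mu_j counts.\<close>

lemma cell_iff: "cell n R i k \<longleftrightarrow> i \<in> R \<and> k \<notin> R \<and> k \<le> n \<and> i < k"
  by (auto simp: cell_def cols_def)

lemma finite_row_cells: "finite {k. cell n R i k \<and> P k}"
  by (rule finite_subset[of _ "{..n}"]) (auto simp: cell_iff)

lemma finite_col_cells: "finite {i. cell n R i k \<and> P i}"
  by (rule finite_subset[of _ "{..n}"]) (auto simp: cell_iff)

lemma adjF_row: "v \<in> R \<Longrightarrow> adjF n R u v \<longleftrightarrow> cell n R v u"
  by (auto simp: adjF_def cell_iff)

lemma adjF_col: "v \<notin> R \<Longrightarrow> adjF n R u v \<longleftrightarrow> cell n R u v"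
  by (auto simp: adjF_def cell_iff)

lemma degF_row: "v \<in> R \<Longrightarrow> degF n R v = card {k. cell n R v k}"
  unfolding degF_def by (rule arg_cong[where f = card]) (auto simp: adjF_row cell_iff)

lemma degF_col: "v \<notin> R \<Longrightarrow> degF n R v = card {i. cell n R i v}"
  unfolding degF_def by (rule arg_cong[where f = card]) (auto simp: adjF_col cell_iff)

lemma finite_adjacent: "finite {u \<in> A. adjF n R u v}"
  by (rule finite_subset[of _ "{..n}"]) (auto simp: adjF_def cell_iff)

lemma card_adjacent_le_degF: "card {u \<in> A. adjF n R u v} \<le> degF n R v"
  unfolding degF_def by (rule card_mono) (auto simp: adjF_def cell_iff)

definition canon_toppled :: "nat \<Rightarrow> nat set \<Rightarrow> (nat \<Rightarrow> nat) \<Rightarrow> nat \<Rightarrow> nat set" where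
  "canon_toppled n R c m = (\<Union>t\<le>m. canon_block n R c t)"

lemma canon_block_0: "canon_block n R c 0 = {0}"
  by (simp add: canon_block_def)

lemma canon_block_Suc:
  "canon_block n R c (Suc m) = {v \<in> (if odd (Suc m) then cols n R else R - {0}).
     degF n R v \<le> fst (canon_stage n R c m) v}"
  by (simp add: canon_block_def Let_def)

lemma canon_stage_Suc:
  "fst (canon_stage n R c (Suc m)) v = fst (canon_stage n R c m) v
     - (if v \<in> canon_block n R c (Suc m) then degF n R v else 0)
     + card {u \<in> canon_block n R c (Suc m). adjF n R u v}"
  by (simp add: canon_block_def Let_def)

declare canon_stage.simps [simp del]

lemma canon_toppled_0: "canon_toppled n R c 0 = {0}"
  by (simp add: canon_toppled_def canon_block_0)

lemma canon_toppled_Suc: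
  "canon_toppled n R c (Suc m) = canon_toppled n R c m \<union> canon_block n R c (Suc m)"
  by (auto simp: canon_toppled_def le_Suc_eq)

lemma canon_toppled_mono: "m \<le> m' \<Longrightarrow> canon_toppled n R c m \<subseteq> canon_toppled n R c m'"
  by (force simp: canon_toppled_def)

lemma bounded_mono_sets_have_maximum:
  fixes f :: "nat \<Rightarrow> 'a set"
  assumes "mono f" and "\<And>m. f m \<subseteq> S" and "finite S"
  obtains M where "\<And>m. f m \<subseteq> f M"
proof -
  have "\<And>m. card (f m) < Suc (card S)"
    using assms(2,3) by (simp add: card_mono less_Suc_eq_le)
  then obtain M where M: "\<And>m. card (f m) \<le> card (f M)"
    using ex_has_greatest_nat[of "\<lambda>_. True" 0 "\<lambda>m. card (f m)"] by blast
  have "f M = f (max m M)" for m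
    using M[of "max m M"] monoD[OF assms(1), of M "max m M"] assms(2,3)
    by (intro card_seteq) (auto intro: finite_subset)
  then show thesis
    using assms(1) by (metis max.cobounded1 monoD that)
qed

lemma card_Un_le_iff:
  assumes "finite A" "finite B" "A \<inter> B = {}" "C \<subseteq> A"
  shows "card (A \<union> B) \<le> card B + card C \<longleftrightarrow> A \<subseteq> C"
proof -
  have "card (A \<union> B) = card A + card B"
    using assms(1-3) by (rule card_Un_disjoint)
  moreover have "card A \<le> card C \<longleftrightarrow> A \<subseteq> C"
    using assms(1,4) card_seteq[of A C] by (metis order_refl subset_antisym)
  ultimately show ?thesis
    by simp
qed

lemma same_parity_between:
  fixes a t :: nat
  assumes "t < a" "a < t + 3" "even a \<longleftrightarrow> even t"
  shows "a = t + 2"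
  using assms by presburger

lemma opposite_parity_gap:
  fixes a b :: nat
  assumes "a < b" "even a \<longleftrightarrow> odd b" "b \<noteq> Suc a"
  shows "a + 3 \<le> b"
  using assms by presburger

locale ferrers_diagram =
  fixes n :: nat and R :: "nat set"
  assumes ferrers: "ferrers n R"
begin

lemma rows_subset: "R \<subseteq> {0..n}" and zero_row: "0 \<in> R"
  using ferrers by (auto simp: ferrers_def)

lemma finite_rows: "finite R"
  using rows_subset finite_subset by blast

end

locale stable_config = ferrers_diagram +
  fixes c :: "nat \<Rightarrow> nat"
  assumes stable: "\<And>v. v \<in> {1..n} \<Longrightarrow> c v < degF n R v"
begin

abbreviation "config m \<equiv> fst (canon_stage n R c m)"
abbreviation "block m \<equiv> canon_block n R c m"
abbreviation "toppled m \<equiv> canon_toppled n R c m"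
abbreviation "blk v \<equiv> block_idx n R c v"

lemma block_subset: "block m \<subseteq> {0..n}"
  using rows_subset by (cases m) (auto simp: canon_block_0 canon_block_Suc cols_def)

lemma toppled_subset: "toppled m \<subseteq> {0..n}"
  using block_subset by (auto simp: canon_toppled_def)

lemma block_parity: "v \<in> block m \<Longrightarrow> v \<in> R \<longleftrightarrow> even m"
  using zero_row by (cases m) (auto simp: canon_block_0 canon_block_Suc cols_def)

lemma zero_notin_block_Suc: "0 \<notin> block (Suc m)"
  using zero_row by (simp add: canon_block_Suc cols_def)

lemma block_Suc_disjoint_if_balanced:
  assumes balanced: "\<And>v. v \<noteq> 0 \<Longrightarrow> config m v + (if v \<in> toppled m then degF n R v else 0)
      = c v + card {u \<in> toppled m. adjF n R u v}"
    and "v \<in> toppled m"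
  shows "v \<notin> block (Suc m)"
proof
  assume v: "v \<in> block (Suc m)"
  then have "v \<in> {1..n}"
    using block_subset[of "Suc m"] zero_notin_block_Suc[of m] by (cases "v = 0") auto
  moreover have "degF n R v \<le> config m v"
    using v by (simp add: canon_block_Suc)
  moreover have "config m v + degF n R v = c v + card {u \<in> toppled m. adjF n R u v}"
    using balanced[of v] \<open>v \<in> toppled m\<close> \<open>v \<in> {1..n}\<close> by simp
  ultimately show False
    using stable[of v] card_adjacent_le_degF[of "toppled m" n R v] by linarith
qed

lemma config_balance:
  "v \<noteq> 0 \<Longrightarrow> config m v + (if v \<in> toppled m then degF n R v else 0)
     = c v + card {u \<in> toppled m. adjF n R u v}"
proof (induction m arbitrary: v)
  case 0
  have "{u \<in> {0}. adjF n R u v} = (if adjF n R 0 v then {0} else {})"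
    by auto
  with 0 show ?case
    by (simp add: canon_toppled_0 canon_block_0 canon_stage.simps(1))
next
  case (Suc m)
  let ?B = "block (Suc m)"
  have disjoint: "toppled m \<inter> ?B = {}"
    using block_Suc_disjoint_if_balanced Suc.IH by blast
  have "card {u \<in> toppled (Suc m). adjF n R u v}
      = card {u \<in> toppled m. adjF n R u v} + card {u \<in> ?B. adjF n R u v}"
    using disjoint
    by (subst card_Un_disjoint[symmetric])
       (auto simp: canon_toppled_Suc finite_adjacent intro: arg_cong[where f = card])
  moreover have "v \<in> ?B \<Longrightarrow> v \<notin> toppled m \<and> degF n R v \<le> config m v"
    using disjoint by (auto simp: canon_block_Suc)
  ultimately show ?case
    using Suc.IH[OF Suc.prems] by (auto simp: canon_stage_Suc canon_toppled_Suc)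
qed

lemma block_Suc_disjoint: "v \<in> toppled m \<Longrightarrow> v \<notin> block (Suc m)"
  using block_Suc_disjoint_if_balanced config_balance by blast

lemma blocks_disjoint: "v \<in> block m \<Longrightarrow> t < m \<Longrightarrow> v \<notin> block t"
  using block_Suc_disjoint[of v "m - 1"] by (cases m) (force simp: canon_toppled_def less_Suc_eq_le)+

lemma blk_eq: "v \<in> block m \<Longrightarrow> blk v = m"
  unfolding block_idx_def
  by (rule Least_equality) (auto dest: blocks_disjoint simp: not_less[symmetric])

lemma block_Suc_iff:
  "v \<in> block (Suc m) \<longleftrightarrow> v \<in> (if odd (Suc m) then cols n R else R - {0}) \<and> v \<notin> toppled m
     \<and> degF n R v \<le> c v + card {u \<in> toppled m. adjF n R u v}"
proof (cases "v \<in> (if odd (Suc m) then cols n R else R - {0}) \<and> v \<notin> toppled m")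
  case True
  then have "v \<noteq> 0"
    using zero_row by (cases "v = 0") (auto simp: cols_def split: if_splits)
  with True have "config m v = c v + card {u \<in> toppled m. adjF n R u v}"
    using config_balance[of v m] by simp
  with True show ?thesis
    by (simp add: canon_block_Suc)
next
  case False
  then show ?thesis
    using block_Suc_disjoint[of v m] by (auto simp: canon_block_Suc)
qed

end

locale ew_tableau = ferrers_diagram +
  fixes T :: "nat \<Rightarrow> nat \<Rightarrow> bool"
  assumes ew: "T \<in> EWtab n R"
begin

lemma top_row_ones: "cell n R 0 k \<Longrightarrow> T 0 k"
  using ew by (simp add: EWtab_def)

lemma row_has_zero: "i \<in> R \<Longrightarrow> i \<noteq> 0 \<Longrightarrow> \<exists>k. cell n R i k \<and> \<not> T i k"
  using ew by (simp add: EWtab_def)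

lemma rectangle_completion:
  assumes "cell n R i k" "cell n R i k'" "cell n R i' k" "cell n R i' k'"
    and "\<not> T i k" "T i k'" "T i' k"
  shows "T i' k'"
  using ew assms unfolding EWtab_def by blast

lemma phiTC_stable:
  assumes "v \<in> {1..n}"
  shows "phiTC n R T v < degF n R v"
proof (cases "v \<in> R")
  case True
  then obtain k where "cell n R v k" "\<not> T v k"
    using row_has_zero assms by auto
  then have "{k. cell n R v k \<and> T v k} \<subset> {k. cell n R v k}"
    by blast
  moreover have "finite {k. cell n R v k}"
    using finite_row_cells[where P = "\<lambda>_. True"] by simp
  ultimately show ?thesis
    using True by (simp add: phiTC_def degF_row psubset_card_mono)
next
  case False
  then have "cell n R 0 v"
    using assms zero_row by (simp add: cell_iff)
  then have "{i. cell n R i v \<and> \<not> T i v} \<subset> {i. cell n R i v}"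
    using top_row_ones by blast
  moreover have "finite {i. cell n R i v}"
    using finite_col_cells[where P = "\<lambda>_. True"] by simp
  ultimately show ?thesis
    using False by (simp add: phiTC_def degF_col psubset_card_mono)
qed

end

sublocale ew_tableau \<subseteq> stable_config n R "phiTC n R T"
  by unfold_locales (fact phiTC_stable)

context ew_tableau
begin

definition separated :: "nat set \<Rightarrow> bool" where
  "separated P \<longleftrightarrow> (\<forall>i k. cell n R i k \<longrightarrow>
     (i \<in> P \<and> k \<notin> P \<longrightarrow> T i k) \<and> (k \<in> P \<and> i \<notin> P \<longrightarrow> \<not> T i k))"

definition ready :: "nat set \<Rightarrow> nat \<Rightarrow> bool" where
  "ready P v \<longleftrightarrow> (if v \<in> R then \<forall>k. cell n R v k \<and> \<not> T v k \<longrightarrow> k \<in> P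
     else \<forall>i. cell n R i v \<and> T i v \<longrightarrow> i \<in> P)"

lemma degF_le_iff_ready:
  assumes "separated P" and "v \<notin> P"
  shows "degF n R v \<le> phiTC n R T v + card {u \<in> P. adjF n R u v} \<longleftrightarrow> ready P v"
proof (cases "v \<in> R")
  case True
  let ?Z = "{k. cell n R v k \<and> \<not> T v k}" and ?O = "{k. cell n R v k \<and> T v k}"
    and ?Q = "{k. cell n R v k \<and> k \<in> P}"
  have "degF n R v = card (?Z \<union> ?O)"
    unfolding degF_row[OF True] by (rule arg_cong[where f = card]) blast
  moreover have "phiTC n R T v = card ?O"
    using True by (simp add: phiTC_def)
  moreover have "{u \<in> P. adjF n R u v} = ?Q"
    using True by (auto simp: adjF_row)
  moreover have "?Q \<subseteq> ?Z"
    using assms by (auto simp: separated_def)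
  ultimately show ?thesis
    using True card_Un_le_iff[of ?Z ?O ?Q] finite_row_cells
    by (simp add: ready_def) blast
next
  case False
  let ?Z = "{i. cell n R i v \<and> \<not> T i v}" and ?O = "{i. cell n R i v \<and> T i v}"
    and ?Q = "{i. cell n R i v \<and> i \<in> P}"
  have "degF n R v = card (?O \<union> ?Z)"
    unfolding degF_col[OF False] by (rule arg_cong[where f = card]) blast
  moreover have "phiTC n R T v = card ?Z"
    using False by (simp add: phiTC_def)
  moreover have "{u \<in> P. adjF n R u v} = ?Q"
    using False by (auto simp: adjF_col)
  moreover have "?Q \<subseteq> ?O"
    using assms by (auto simp: separated_def)
  ultimately show ?thesis
    using False card_Un_le_iff[of ?O ?Z ?Q] finite_col_cells
    by (simp add: ready_def) blast
qed

lemma block_Suc_iff_ready_if_separated: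
  assumes "separated (toppled m)"
  shows "v \<in> block (Suc m) \<longleftrightarrow> v \<in> (if odd (Suc m) then cols n R else R - {0})
     \<and> v \<notin> toppled m \<and> ready (toppled m) v"
  using block_Suc_iff degF_le_iff_ready[OF assms] by blast

lemma separated_toppled: "separated (toppled m)"
proof (induction m)
  case 0
  show ?case
    using top_row_ones by (auto simp: separated_def canon_toppled_0 cell_iff)
next
  case (Suc m)
  have "T i k" if "cell n R i k" "i \<in> block (Suc m)" "k \<notin> toppled (Suc m)" for i k
    using that block_Suc_iff_ready_if_separated[OF Suc.IH, of i]
    by (auto simp: ready_def cell_iff canon_toppled_Suc)
  moreover have "\<not> T i k" if "cell n R i k" "k \<in> block (Suc m)" "i \<notin> toppled (Suc m)" for i k
    using that block_Suc_iff_ready_if_separated[OF Suc.IH, of k]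
    by (auto simp: ready_def cell_iff canon_toppled_Suc)
  ultimately show ?case
    using Suc.IH by (auto simp: separated_def canon_toppled_Suc)
qed

lemma block_Suc_iff_ready:
  "v \<in> block (Suc m) \<longleftrightarrow> v \<in> (if odd (Suc m) then cols n R else R - {0})
     \<and> v \<notin> toppled m \<and> ready (toppled m) v"
  by (rule block_Suc_iff_ready_if_separated[OF separated_toppled])

text \<open>Read T as a bipartite digraph with an arc from row i to column k for each 0 at (i,k)
  and from column k to row i for each 1; the hypotheses say that every vertex of R' \<union> C' has
  an out-neighbour in R' \<union> C'. The topmost row i0 of R' meets every column of C', so by the
  rectangle condition the rows with a 1 in a column where i0 has a 0 again have a 0 in such a
  column.\<close>
lemma alternating_cycle_shrinks:
  assumes "R' \<subseteq> R" and "finite R'" and "R' \<noteq> {}"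
    and ones: "\<forall>k\<in>C'. \<exists>i\<in>R'. cell n R i k \<and> T i k"
    and zeros: "\<forall>i\<in>R'. \<exists>k\<in>C'. cell n R i k \<and> \<not> T i k"
  obtains R2 C2 where "R2 \<subset> R'" and "C2 \<noteq> {}"
    and "\<forall>k\<in>C2. \<exists>i\<in>R2. cell n R i k \<and> T i k"
    and "\<forall>i\<in>R2. \<exists>k\<in>C2. cell n R i k \<and> \<not> T i k"
proof -
  define i0 where "i0 = Min R'"
  have "i0 \<in> R'"
    unfolding i0_def using assms(2,3) by (rule Min_in)
  have i0_le: "i0 \<le> i" if "i \<in> R'" for i
    unfolding i0_def using assms(2) that by (rule Min_le)
  have top: "cell n R i0 k" if "k \<in> C'" for k
  proof -
    obtain i where "i \<in> R'" "cell n R i k"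
      using ones \<open>k \<in> C'\<close> by blast
    then show ?thesis
      using \<open>i0 \<in> R'\<close> i0_le[of i] assms(1) by (auto simp: cell_iff)
  qed
  define C2 where "C2 = {k \<in> C'. \<not> T i0 k}"
  define R2 where "R2 = {i \<in> R'. \<exists>k\<in>C2. cell n R i k \<and> T i k}"
  have "R2 \<subset> R'"
    using \<open>i0 \<in> R'\<close> unfolding R2_def C2_def by blast
  moreover have "C2 \<noteq> {}"
    using zeros \<open>i0 \<in> R'\<close> unfolding C2_def by blast
  moreover have "\<forall>k\<in>C2. \<exists>i\<in>R2. cell n R i k \<and> T i k"
    using ones unfolding R2_def C2_def by blast
  moreover have "\<forall>i\<in>R2. \<exists>k\<in>C2. cell n R i k \<and> \<not> T i k"
  proof
    fix i
    assume "i \<in> R2"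
    then obtain k where k: "k \<in> C2" "cell n R i k" "T i k" and "i \<in> R'"
      unfolding R2_def by blast
    then obtain k' where k': "k' \<in> C'" "cell n R i k'" "\<not> T i k'"
      using zeros by blast
    have "k \<in> C'" "\<not> T i0 k"
      using k(1) by (simp_all add: C2_def)
    then have "\<not> T i0 k'"
      using rectangle_completion[OF top top k(2) k'(2)] k(3) k'(1,3) by blast
    with k' show "\<exists>k\<in>C2. cell n R i k \<and> \<not> T i k"
      unfolding C2_def by blast
  qed
  ultimately show thesis
    by (rule that)
qed

lemma no_alternating_cycle:
  assumes "R' \<subseteq> R"
    and "\<forall>k\<in>C'. \<exists>i\<in>R'. cell n R i k \<and> T i k"
    and "\<forall>i\<in>R'. \<exists>k\<in>C'. cell n R i k \<and> \<not> T i k"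
  shows "R' = {}"
proof -
  have "finite R'"
    using assms(1) finite_rows finite_subset by blast
  then show ?thesis
    using assms
  proof (induction R' arbitrary: C' rule: finite_psubset_induct)
    case (psubset R')
    show ?case
    proof (rule ccontr)
      assume "R' \<noteq> {}"
      then obtain R2 C2 where "R2 \<subset> R'" "C2 \<noteq> {}"
        and ones: "\<forall>k\<in>C2. \<exists>i\<in>R2. cell n R i k \<and> T i k"
        and zeros: "\<forall>i\<in>R2. \<exists>k\<in>C2. cell n R i k \<and> \<not> T i k"
        using alternating_cycle_shrinks[OF psubset.prems(1) psubset.hyps]
          psubset.prems(2,3) by blast
      moreover have "R2 \<subseteq> R"
        using \<open>R2 \<subset> R'\<close> psubset.prems(1) by blast
      ultimately have "R2 = {}"
        using psubset.IH by blast
      with \<open>C2 \<noteq> {}\<close> ones show False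
        by blast
    qed
  qed
qed

lemma in_some_block:
  assumes "v \<le> n"
  shows "\<exists>m. v \<in> block m"
proof -
  obtain M where M: "\<And>m. toppled m \<subseteq> toppled M"
    using bounded_mono_sets_have_maximum[of toppled "{0..n}"] toppled_subset canon_toppled_mono
    by (auto simp: mono_def)
  have not_ready: "\<not> ready (toppled M) u" if "u \<in> {1..n}" "u \<notin> toppled M" for u
  proof -
    define s where "s = 2 * M + (if u \<in> R then 1 else 0)"
    have "M \<le> s"
      by (simp add: s_def)
    then have "toppled s = toppled M"
      using M[of s] canon_toppled_mono by blast
    moreover have "u \<notin> block (Suc s)"
      using M[of "Suc s"] that by (auto simp: canon_toppled_Suc)
    ultimately show ?thesis
      using block_Suc_iff_ready[of u s] that by (auto simp: s_def cols_def)
  qed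
  have "0 \<in> toppled M"
    using M[of 0] by (simp add: canon_toppled_0)
  have col_witness: "\<exists>i\<in>R - toppled M. cell n R i k \<and> T i k" if "k \<in> cols n R - toppled M" for k
    using that not_ready[of k] zero_row by (cases "k = 0") (auto simp: ready_def cell_iff cols_def)
  have row_witness: "\<exists>k\<in>cols n R - toppled M. cell n R i k \<and> \<not> T i k" if "i \<in> R - toppled M" for i
    using that not_ready[of i] rows_subset \<open>0 \<in> toppled M\<close>
    by (cases "i = 0") (auto simp: ready_def cell_iff cols_def subset_iff)
  have "R - toppled M = {}"
    using no_alternating_cycle[of "R - toppled M" "cols n R - toppled M"] col_witness row_witness
    by blast
  then have "{0..n} \<subseteq> toppled M"
    using col_witness unfolding cols_def by blast
  with assms show ?thesis
    unfolding canon_toppled_def by auto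
qed

lemma blk_in_block: "v \<le> n \<Longrightarrow> v \<in> block (blk v)"
  unfolding block_idx_def by (rule LeastI_ex) (rule in_some_block)

lemma in_block_iff: "v \<in> block m \<longleftrightarrow> v \<le> n \<and> blk v = m"
  using blk_in_block blk_eq block_subset by fastforce

lemma toppled_iff: "v \<le> n \<Longrightarrow> v \<in> toppled m \<longleftrightarrow> blk v \<le> m"
  by (auto simp: canon_toppled_def in_block_iff)

lemma blk_parity: "v \<le> n \<Longrightarrow> v \<in> R \<longleftrightarrow> even (blk v)"
  using block_parity blk_in_block by blast

lemma blk_row_even: "j \<in> R \<Longrightarrow> even (blk j)"
  using rows_subset blk_parity by auto

lemma blk_col_odd: "j \<in> cols n R \<Longrightarrow> odd (blk j)"
  using blk_parity by (auto simp: cols_def)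

lemma blk_eq_0_iff: "v \<le> n \<Longrightarrow> blk v = 0 \<longleftrightarrow> v = 0"
  using in_block_iff[of v 0] by (auto simp: canon_block_0)

text \<open>That is, S(T) agrees with T on the cells of F.\<close>
lemma T_iff_blk:
  assumes "cell n R i k"
  shows "T i k \<longleftrightarrow> blk i < blk k"
proof -
  have "i \<le> n" "k \<le> n" "even (blk i)" "odd (blk k)"
    using assms blk_parity by (auto simp: cell_iff)
  then consider "blk i < blk k" | "blk k < blk i"
    by (metis linorder_neqE_nat)
  then show ?thesis
  proof cases
    case 1
    then have "i \<in> toppled (blk i)" "k \<notin> toppled (blk i)"
      using \<open>i \<le> n\<close> \<open>k \<le> n\<close> by (simp_all add: toppled_iff)
    with 1 show ?thesis
      using separated_toppled assms by (auto simp: separated_def)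
  next
    case 2
    then have "k \<in> toppled (blk k)" "i \<notin> toppled (blk k)"
      using \<open>i \<le> n\<close> \<open>k \<le> n\<close> by (simp_all add: toppled_iff)
    with 2 show ?thesis
      using separated_toppled assms by (auto simp: separated_def)
  qed
qed

lemma blk_predecessor:
  assumes "v \<le> n" and "blk v = Suc m"
  shows "\<exists>u\<le>n. blk u = m"
proof -
  consider "m = 0" | "m = 1" | t where "m = Suc (Suc t)"
    by (metis One_nat_def not0_implies_Suc)
  then show ?thesis
  proof cases
    case 1
    then show ?thesis
      using blk_eq_0_iff by blast
  next
    case 2
    then have "v \<in> R" "v \<noteq> 0"
      using assms blk_parity blk_eq_0_iff[of v] by auto
    then obtain k where "cell n R v k" "\<not> T v k"
      using row_has_zero by blast
    then have "odd (blk k)" "\<not> blk v < blk k"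
      using blk_parity T_iff_blk by (auto simp: cell_iff)
    then have "blk k = m"
      using assms(2) 2 by (auto simp: not_less le_Suc_eq)
    with \<open>cell n R v k\<close> show ?thesis
      by (auto simp: cell_iff)
  next
    case 3
    then have "v \<notin> block (Suc t)" "v \<notin> toppled t" "v \<noteq> 0"
      using assms in_block_iff toppled_iff blk_eq_0_iff[of v] by auto
    moreover have "v \<in> R \<longleftrightarrow> odd t"
      using assms 3 blk_parity by simp
    ultimately have "\<not> ready (toppled t) v"
      using block_Suc_iff_ready[of v t] assms by (auto simp: cols_def)
    then obtain u where u: "u \<le> n" "t < blk u" "blk u \<le> blk v" "u \<in> R \<longleftrightarrow> v \<notin> R"
    proof (cases "v \<in> R")
      case True
      with \<open>\<not> ready (toppled t) v\<close> obtain k where "cell n R v k" "\<not> T v k" "k \<notin> toppled t"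
        by (auto simp: ready_def)
      with True show thesis
        using that[of k] T_iff_blk toppled_iff by (auto simp: cell_iff)
    next
      case False
      with \<open>\<not> ready (toppled t) v\<close> obtain i where "cell n R i v" "T i v" "i \<notin> toppled t"
        by (auto simp: ready_def)
      with False show thesis
        using that[of i] T_iff_blk toppled_iff by (auto simp: cell_iff)
    qed
    moreover have "blk u \<noteq> blk v"
      using u(1,4) assms(1) blk_parity by auto
    ultimately have "blk u < t + 3" "even (blk u) \<longleftrightarrow> even t"
      using assms(2) 3 blk_parity[of u] \<open>v \<in> R \<longleftrightarrow> odd t\<close> by auto
    then have "blk u = m"
      using same_parity_between[OF \<open>t < blk u\<close>] 3 by simp
    with u(1) show ?thesis
      by blast
  qed
qed

lemma blk_below:
  assumes "v \<le> n" and "m \<le> blk v"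
  shows "\<exists>u\<le>n. blk u = m"
  using assms(2)
proof (induction "blk v - m" arbitrary: m)
  case 0
  then show ?case
    using assms(1) by auto
next
  case (Suc d)
  then have "d = blk v - Suc m" "Suc m \<le> blk v"
    by arith+
  then obtain u where "u \<le> n" "blk u = Suc m"
    using Suc.hyps(1) by blast
  then show ?case
    by (rule blk_predecessor)
qed

lemma cornersupport_iff_blocks:
  assumes "cell n R i k"
  shows "cornersupport n R T i k \<longleftrightarrow> (\<exists>j'\<in>R. \<exists>k'\<in>cols n R. j' \<noteq> i \<and> k' \<noteq> k
      \<and> (blk j' < blk k') \<noteq> (blk i < blk k) \<and> (blk j' < blk k \<longleftrightarrow> blk i < blk k)
      \<and> (blk i < blk k' \<longleftrightarrow> blk i < blk k))"
  using T_iff_blk[OF assms] by (simp add: cornersupport_def suppl_def Let_def)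

lemma row_col_blk_neq: "j \<in> R \<Longrightarrow> k \<in> cols n R \<Longrightarrow> blk j \<noteq> blk k"
  using blk_row_even blk_col_odd by force

lemma cornersupport_one_iff:
  assumes ik: "cell n R i k" and lt: "blk i < blk k"
  shows "cornersupport n R T i k \<longleftrightarrow> blk i + 3 \<le> blk k"
proof
  assume "cornersupport n R T i k"
  then obtain j' k' where "j' \<in> R" "k' \<in> cols n R"
    "blk i < blk k'" "\<not> blk j' < blk k'" "blk j' < blk k"
    using cornersupport_iff_blocks[OF ik] lt by auto
  then show "blk i + 3 \<le> blk k"
    using row_col_blk_neq by fastforce
next
  assume gap: "blk i + 3 \<le> blk k"
  have "k \<le> n" "odd (blk k)"
    using ik blk_parity by (auto simp: cell_iff)
  then obtain j' k' where j': "j' \<le> n" "blk j' = blk k - 1" and k': "k' \<le> n" "blk k' = blk k - 2"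
    using blk_below by (metis diff_le_self)
  have "j' \<in> R" "k' \<in> cols n R"
    using j' k' gap \<open>odd (blk k)\<close> blk_parity by (auto simp: cols_def)
  with j' k' gap show "cornersupport n R T i k"
    using lt by (intro iffD2[OF cornersupport_iff_blocks[OF ik]] bexI) auto
qed

lemma cornersupport_zero_iff:
  assumes ik: "cell n R i k" and lt: "blk k < blk i"
  shows "cornersupport n R T i k \<longleftrightarrow> blk k + 3 \<le> blk i"
proof
  assume "cornersupport n R T i k"
  then obtain j' k' where "j' \<in> R" "k' \<in> cols n R"
    "blk j' < blk k'" "\<not> blk j' < blk k" "\<not> blk i < blk k'"
    using cornersupport_iff_blocks[OF ik] lt by auto
  then show "blk k + 3 \<le> blk i"
    using row_col_blk_neq[of j' k] row_col_blk_neq[of i k'] ik by (fastforce simp: cell_def)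
next
  assume gap: "blk k + 3 \<le> blk i"
  have "i \<le> n" "even (blk i)"
    using ik blk_parity by (auto simp: cell_iff)
  then obtain j' k' where j': "j' \<le> n" "blk j' = blk i - 2" and k': "k' \<le> n" "blk k' = blk i - 1"
    using blk_below by (metis diff_le_self)
  have "j' \<in> R" "k' \<in> cols n R"
    using j' k' gap \<open>even (blk i)\<close> blk_parity by (auto simp: cols_def)
  with j' k' gap show "cornersupport n R T i k"
    using lt by (intro iffD2[OF cornersupport_iff_blocks[OF ik]] bexI) auto
qed

lemma cornersupport_iff:
  assumes ik: "cell n R i k"
  shows "cornersupport n R T i k \<longleftrightarrow> blk k \<noteq> Suc (blk i) \<and> blk i \<noteq> Suc (blk k)"
proof -
  have parity: "even (blk i) \<longleftrightarrow> odd (blk k)"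
    using ik blk_parity by (auto simp: cell_iff)
  then consider "blk i < blk k" | "blk k < blk i"
    by (metis linorder_neqE_nat)
  then show ?thesis
  proof cases
    case 1
    then show ?thesis
      using cornersupport_one_iff[OF ik] opposite_parity_gap[OF _ parity] by force
  next
    case 2
    then show ?thesis
      using cornersupport_zero_iff[OF ik] opposite_parity_gap[of "blk k" "blk i"] parity by force
  qed
qed

lemma nonsupport_zeros_in_row:
  assumes "j \<in> R"
  shows "{k. cell n R j k \<and> \<not> T j k \<and> \<not> cornersupport n R T j k} = {k \<in> block (blk j - 1). j < k}"
proof (intro set_eqI iffI)
  fix k
  assume "k \<in> {k. cell n R j k \<and> \<not> T j k \<and> \<not> cornersupport n R T j k}"
  then have "cell n R j k" "blk j = Suc (blk k)"
    using T_iff_blk cornersupport_iff by auto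
  then show "k \<in> {k \<in> block (blk j - 1). j < k}"
    by (auto simp: in_block_iff cell_iff)
next
  fix k
  assume "k \<in> {k \<in> block (blk j - 1). j < k}"
  then have k: "k \<le> n" "blk k = blk j - 1" "j < k"
    by (auto simp: in_block_iff)
  then have "blk j \<noteq> 0"
    using blk_eq_0_iff by force
  then have "blk j = Suc (blk k)" "k \<notin> R"
    using k blk_parity blk_row_even[OF assms] by auto
  then show "k \<in> {k. cell n R j k \<and> \<not> T j k \<and> \<not> cornersupport n R T j k}"
    using assms k T_iff_blk cornersupport_iff by (auto simp: cell_iff)
qed

lemma nonsupport_ones_in_col:
  assumes "j \<le> n" and "j \<notin> R"
  shows "{i. cell n R i j \<and> T i j \<and> \<not> cornersupport n R T i j} = {i \<in> block (blk j - 1). i < j}"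
proof (intro set_eqI iffI)
  fix i
  assume "i \<in> {i. cell n R i j \<and> T i j \<and> \<not> cornersupport n R T i j}"
  then have "cell n R i j" "blk j = Suc (blk i)"
    using T_iff_blk cornersupport_iff by auto
  then show "i \<in> {i \<in> block (blk j - 1). i < j}"
    by (auto simp: in_block_iff cell_iff)
next
  fix i
  assume "i \<in> {i \<in> block (blk j - 1). i < j}"
  then have i: "i \<le> n" "blk i = blk j - 1" "i < j"
    by (auto simp: in_block_iff)
  have "odd (blk j)"
    using assms blk_parity by simp
  then have "blk j = Suc (blk i)" "i \<in> R"
    using i blk_parity by (auto elim: oddE)
  then show "i \<in> {i. cell n R i j \<and> T i j \<and> \<not> cornersupport n R T i j}"
    using assms i T_iff_blk cornersupport_iff by (auto simp: cell_iff)
qed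

end

theorem lemma4p11:
  assumes "ferrers n R"
    and "T \<in> EWtab n R"
    and "j \<in> {1..n}"
  shows "nu n R T j = mu n R (phiTC n R T) j"
proof -
  interpret ew_tableau n R T
    using assms(1,2) by unfold_locales
  have "j \<le> n"
    using assms(3) by simp
  then show ?thesis
    using nonsupport_zeros_in_row nonsupport_ones_in_col blk_parity
    by (simp add: nu_def mu_def Let_def)
qed

end
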